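(* Let $n,k\ge1$, $N=2^n$, and let $\mathcal{C}$ be a class of polynomials in $\mathbb{F}[X_1,\ldots,X_N]$ such that for every $F\in\mathcal{C}$, the shifted polynomial $F(X+\mathbf{1})$ (with $\mathbf{1}$ the all-ones vector) contains a monomial whose support has size at most $k$. Then for every $F\in\mathcal{C}$ with $F\not\equiv 0$, we have $F\circ\mathcal{G}^{\mathrm{SSSV}}_{n,k}(y,z)\not\equiv0$.
   Context: Let $P(z_1,\ldots,z_n,x_1,\ldots,x_n)=\prod_{i=1}^n(z_ix_i+(1-z_i))$, $Q^{\mathrm{SSV}}_{n,k}(y,z,x)=\sum_{j=1}^k y_jP(z_j,x)$ with $z_j=(z_{j,1},\ldots,z_{j,n})$, and $Q^{\mathrm{SSSV}}_{n,k}(y,z,x)=Q^{\mathrm{SSV}}_{n,k}(y,z,x)+\prod_{i=1}^n(x_i+1)$. $\mathcal{G}^{\mathrm{SSSV}}_{n,k}(y,z)$ is the coefficient vector of $Q^{\mathrm{SSSV}}_{n,k}$ viewed as a multilinear polynomial in $x$; its $2^n=N$ coordinates, indexed by subsets $S\subseteq[n]$, are identified with the variables $X_1,\ldots,X_N$ (via $i-1=\sum_{k\in S}2^{k-1}$), and $F\circ\mathcal{G}$ denotes substituting coordinate $i$ of $\mathcal{G}$ for $X_i$. The support of a monomial is the set of variables appearing in it. *)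

theory Defs
  imports Main "HOL-Library.Poly_Mapping"
begin

type_synonym ('v, 'a) mpoly = "('v \<Rightarrow>\<^sub>0 nat) \<Rightarrow>\<^sub>0 'a"

definition mconst :: "'a::zero \<Rightarrow> ('v, 'a) mpoly" where
  "mconst c = Poly_Mapping.single 0 c"

definition mvar :: "'v \<Rightarrow> ('v, 'a::{zero,one}) mpoly" where
  "mvar v = Poly_Mapping.single (Poly_Mapping.single v 1) 1"

definition mvars :: "('v, 'a::zero) mpoly \<Rightarrow> 'v set" where
  "mvars p = \<Union> (Poly_Mapping.keys ` Poly_Mapping.keys (p :: ('v \<Rightarrow>\<^sub>0 nat) \<Rightarrow>\<^sub>0 'a))"

definition msubst :: "('v \<Rightarrow> ('w, 'a::comm_ring_1) mpoly) \<Rightarrow> ('v, 'a) mpoly \<Rightarrow> ('w, 'a) mpoly" where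
  "msubst \<sigma> p = (\<Sum>m\<in>Poly_Mapping.keys p. mconst (Poly_Mapping.lookup p m) * (\<Prod>v\<in>Poly_Mapping.keys m. \<sigma> v ^ Poly_Mapping.lookup m v))"

definition msupport :: "('v \<Rightarrow>\<^sub>0 nat) \<Rightarrow> 'v set" where
  "msupport m = Poly_Mapping.keys m"

definition shift_one :: "('v, 'a::comm_ring_1) mpoly \<Rightarrow> ('v, 'a) mpoly" where
  "shift_one F = msubst (\<lambda>v. mvar v + 1) F"

datatype gvar = XV nat | YV nat | ZV nat nat

definition P_poly :: "nat \<Rightarrow> nat \<Rightarrow> (gvar, 'a::comm_ring_1) mpoly" where
  "P_poly n j = (\<Prod>i\<in>{1..n}. mvar (ZV j i) * mvar (XV i) + (1 - mvar (ZV j i)))"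

definition Q_SSV :: "nat \<Rightarrow> nat \<Rightarrow> (gvar, 'a::comm_ring_1) mpoly" where
  "Q_SSV n k = (\<Sum>j\<in>{1..k}. mvar (YV j) * P_poly n j)"

definition Q_SSSV :: "nat \<Rightarrow> nat \<Rightarrow> (gvar, 'a::comm_ring_1) mpoly" where
  "Q_SSSV n k = Q_SSV n k + (\<Prod>i\<in>{1..n}. mvar (XV i) + 1)"

definition is_xvar :: "gvar \<Rightarrow> bool" where
  "is_xvar v = (\<exists>i. v = XV i)"

text \<open>Coefficient of x^S (S a set of x-indices) of p, viewed as a polynomial in the
  x-variables with coefficients polynomials in the remaining (y,z) variables.\<close>
definition xcoeff :: "nat set \<Rightarrow> (gvar, 'a::comm_ring_1) mpoly \<Rightarrow> (gvar, 'a) mpoly" where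
  "xcoeff S p = (\<Sum>m\<in>{m\<in>Poly_Mapping.keys p. \<forall>i. Poly_Mapping.lookup m (XV i) = (if i \<in> S then 1 else 0)}.
       mconst (Poly_Mapping.lookup p m) * (\<Prod>v\<in>{v\<in>Poly_Mapping.keys m. \<not> is_xvar v}. mvar v ^ Poly_Mapping.lookup m v))"

text \<open>The subset of [n] corresponding to index i \<in> {1..N}: i - 1 = sum of 2^(k-1), k \<in> S.\<close>
definition index_set :: "nat \<Rightarrow> nat \<Rightarrow> nat set" where
  "index_set n i = {k\<in>{1..n}. odd ((i - 1) div 2 ^ (k - 1))}"

text \<open>Coordinate i (1 \<le> i \<le> 2^n) of G^SSSV_{n,k}(y,z).\<close>
definition G_SSSV :: "nat \<Rightarrow> nat \<Rightarrow> nat \<Rightarrow> (gvar, 'a::comm_ring_1) mpoly" where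
  "G_SSSV n k i = xcoeff (index_set n i) (Q_SSSV n k)"

definition compose_G :: "(nat, 'a::comm_ring_1) mpoly \<Rightarrow> nat \<Rightarrow> nat \<Rightarrow> (gvar, 'a) mpoly" where
  "compose_G F n k = msubst (G_SSSV n k) F"

end

theory Submission
  imports Defs
begin

text \<open>
  Take a monomial \<open>x\<^sup>m\<close> of \<open>F(X + 1)\<close> whose support \<open>T\<close> has at most \<open>k\<close> elements and
  attach to every \<open>t \<in> T\<close> its own summand \<open>j(t)\<close> of \<open>Q\<^sup>S\<^sup>S\<^sup>V\<close>: set \<open>y\<^sub>j\<^sub>(\<^sub>t\<^sub>) := X\<^sub>t\<close>,
  let \<open>z\<^sub>j\<^sub>(\<^sub>t\<^sub>)\<close> be the 0/1 vector of the subset of \<open>[n]\<close> indexed by \<open>t\<close>, and kill all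
  other \<open>y\<^sub>j\<close>. Then \<open>P(z\<^sub>j\<^sub>(\<^sub>t\<^sub>), x)\<close> is the single monomial \<open>x\<^sup>S\<close> with \<open>S\<close> indexed by \<open>t\<close>,
  so the specialised \<open>\<G>\<^sup>S\<^sup>S\<^sup>S\<^sup>V\<close> has coordinates \<open>X\<^sub>i + 1\<close> for \<open>i \<in> T\<close> and \<open>1\<close> otherwise
  (the \<open>1\<close> comes from the summand \<open>\<Prod>(x\<^sub>i + 1)\<close>). Hence \<open>F \<circ> \<G>\<^sup>S\<^sup>S\<^sup>S\<^sup>V\<close> specialises to \<open>F(X + 1)\<close> with the variables outside \<open>T\<close> set
  to \<open>0\<close>, which still contains \<open>x\<^sup>m\<close>.
\<close>

section \<open>Substitution is a ring homomorphism\<close>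

lemma poly_mapping_sum_single:
  "p = (\<Sum>m\<in>Poly_Mapping.keys p. Poly_Mapping.single m (Poly_Mapping.lookup p m))"
  by (rule poly_mapping_eqI) (simp add: lookup_sum lookup_single when_def in_keys_iff)

definition msubst_monom :: "('v \<Rightarrow> ('w, 'a::comm_ring_1) mpoly) \<Rightarrow> ('v \<Rightarrow>\<^sub>0 nat) \<Rightarrow> ('w, 'a) mpoly" where
  "msubst_monom \<sigma> m = (\<Prod>v\<in>Poly_Mapping.keys m. \<sigma> v ^ Poly_Mapping.lookup m v)"

lemma msubst_monom_over_superset:
  "finite K \<Longrightarrow> Poly_Mapping.keys m \<subseteq> K \<Longrightarrow>
   msubst_monom \<sigma> m = (\<Prod>v\<in>K. \<sigma> v ^ Poly_Mapping.lookup m v)"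
  unfolding msubst_monom_def by (rule prod.mono_neutral_left) (auto simp: in_keys_iff)

lemma msubst_monom_0 [simp]: "msubst_monom \<sigma> 0 = 1"
  by (simp add: msubst_monom_def)

lemma msubst_monom_add: "msubst_monom \<sigma> (a + b) = msubst_monom \<sigma> a * msubst_monom \<sigma> b"
proof -
  let ?K = "Poly_Mapping.keys a \<union> Poly_Mapping.keys b"
  have "msubst_monom \<sigma> (a + b) = (\<Prod>v\<in>?K. \<sigma> v ^ Poly_Mapping.lookup (a + b) v)"
    by (rule msubst_monom_over_superset) (auto simp: keys_add)
  also have "\<dots> = (\<Prod>v\<in>?K. \<sigma> v ^ Poly_Mapping.lookup a v) * (\<Prod>v\<in>?K. \<sigma> v ^ Poly_Mapping.lookup b v)"
    by (simp add: lookup_add power_add prod.distrib)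
  also have "\<dots> = msubst_monom \<sigma> a * msubst_monom \<sigma> b"
    by (simp add: msubst_monom_over_superset[of ?K a] msubst_monom_over_superset[of ?K b])
  finally show ?thesis .
qed

lemma mvar_power: "mvar v ^ e = Poly_Mapping.single (Poly_Mapping.single v e) 1"
  by (induction e) (auto simp: mvar_def mult_single single_add[symmetric])

lemma prod_single_one:
  "(\<Prod>v\<in>K. Poly_Mapping.single (f v) (1::'a::comm_ring_1)) = Poly_Mapping.single (\<Sum>v\<in>K. f v) 1"
  by (induction K rule: infinite_finite_induct) (auto simp: mult_single)

lemma msubst_monom_mvar: "msubst_monom mvar m = (Poly_Mapping.single m 1 :: ('v, 'a::comm_ring_1) mpoly)"
  unfolding msubst_monom_def mvar_power prod_single_one
  using poly_mapping_sum_single[of m, symmetric] by simp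

lemma mconst_0 [simp]: "mconst 0 = 0"
  by (simp add: mconst_def)

lemma mconst_add: "mconst (a + b) = mconst a + mconst b"
  by (simp add: mconst_def single_add)

lemma mconst_mult: "mconst (a * b) = mconst a * mconst b"
  by (simp add: mconst_def mult_single)

lemma mconst_mult_single_one:
  "mconst (a::'a::comm_ring_1) * Poly_Mapping.single m 1 = Poly_Mapping.single m a"
  by (simp add: mconst_def mult_single)

lemma msubst_eq_sum_over_superset:
  "finite A \<Longrightarrow> Poly_Mapping.keys p \<subseteq> A \<Longrightarrow>
   msubst \<sigma> p = (\<Sum>m\<in>A. mconst (Poly_Mapping.lookup p m) * msubst_monom \<sigma> m)"
  unfolding msubst_def msubst_monom_def[symmetric]
  by (rule sum.mono_neutral_left) (auto simp: in_keys_iff)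

lemma msubst_single: "msubst \<sigma> (Poly_Mapping.single m c) = mconst c * msubst_monom \<sigma> m"
  by (cases "c = 0") (auto simp: msubst_def msubst_monom_def)

lemma msubst_add: "msubst \<sigma> (p + q) = msubst \<sigma> p + msubst \<sigma> q"
proof -
  let ?A = "Poly_Mapping.keys p \<union> Poly_Mapping.keys q"
  have "msubst \<sigma> (p + q) = (\<Sum>m\<in>?A. mconst (Poly_Mapping.lookup (p + q) m) * msubst_monom \<sigma> m)"
    by (rule msubst_eq_sum_over_superset) (auto simp: keys_add)
  also have "\<dots> = (\<Sum>m\<in>?A. mconst (Poly_Mapping.lookup p m) * msubst_monom \<sigma> m)
                 + (\<Sum>m\<in>?A. mconst (Poly_Mapping.lookup q m) * msubst_monom \<sigma> m)"
    by (simp add: lookup_add mconst_add distrib_right sum.distrib)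
  also have "\<dots> = msubst \<sigma> p + msubst \<sigma> q"
    by (simp add: msubst_eq_sum_over_superset[of ?A p] msubst_eq_sum_over_superset[of ?A q])
  finally show ?thesis .
qed

lemma msubst_0 [simp]: "msubst \<sigma> 0 = 0"
  by (simp add: msubst_def)

lemma msubst_sum: "msubst \<sigma> (\<Sum>i\<in>I. f i) = (\<Sum>i\<in>I. msubst \<sigma> (f i))"
  by (induction I rule: infinite_finite_induct) (auto simp: msubst_add)

lemma msubst_mult: "msubst \<sigma> (p * q) = msubst \<sigma> p * msubst \<sigma> q"
proof -
  have pq: "p * q = (\<Sum>a\<in>Poly_Mapping.keys p. \<Sum>b\<in>Poly_Mapping.keys q.
       Poly_Mapping.single (a + b) (Poly_Mapping.lookup p a * Poly_Mapping.lookup q b))"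
    by (subst poly_mapping_sum_single[of p], subst poly_mapping_sum_single[of q])
       (simp add: sum_distrib_left sum_distrib_right mult_single sum.swap[of _ "Poly_Mapping.keys q"])
  have "msubst \<sigma> (p * q) = (\<Sum>a\<in>Poly_Mapping.keys p. \<Sum>b\<in>Poly_Mapping.keys q.
       (mconst (Poly_Mapping.lookup p a) * msubst_monom \<sigma> a)
       * (mconst (Poly_Mapping.lookup q b) * msubst_monom \<sigma> b))"
    unfolding pq msubst_sum msubst_single msubst_monom_add mconst_mult by (simp add: ac_simps)
  also have "\<dots> = msubst \<sigma> p * msubst \<sigma> q"
    by (simp add: msubst_def msubst_monom_def sum_distrib_left sum_distrib_right
        sum.swap[of _ "Poly_Mapping.keys q"])
  finally show ?thesis .
qed

lemma msubst_1 [simp]: "msubst \<sigma> 1 = 1"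
  using msubst_single[of \<sigma> 0 1] by (simp add: mconst_def)

lemma msubst_mconst [simp]: "msubst \<sigma> (mconst c) = mconst c"
  unfolding mconst_def msubst_single by simp

lemma msubst_mvar [simp]: "msubst \<sigma> (mvar v) = \<sigma> v"
  unfolding mvar_def msubst_single by (simp add: mconst_def msubst_monom_def)

lemma msubst_diff: "msubst \<sigma> (p - q) = msubst \<sigma> p - msubst \<sigma> q"
  using msubst_add[of \<sigma> "p - q" q] by (simp add: eq_diff_eq)

lemma msubst_power: "msubst \<sigma> (p ^ e) = msubst \<sigma> p ^ e"
  by (induction e) (auto simp: msubst_mult)

lemma msubst_prod: "msubst \<sigma> (\<Prod>i\<in>I. f i) = (\<Prod>i\<in>I. msubst \<sigma> (f i))"
  by (induction I rule: infinite_finite_induct) (auto simp: msubst_mult)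

lemma msubst_msubst: "msubst \<tau> (msubst \<sigma> p) = msubst (\<lambda>v. msubst \<tau> (\<sigma> v)) p"
  unfolding msubst_def[of \<sigma>]
  by (simp add: msubst_sum msubst_mult msubst_prod msubst_power msubst_def[of _ p])

lemma msubst_cong: "(\<And>v. v \<in> mvars p \<Longrightarrow> \<sigma> v = \<sigma>' v) \<Longrightarrow> msubst \<sigma> p = msubst \<sigma>' p"
  unfolding msubst_def mvars_def
  by (intro sum.cong refl arg_cong2[where f="(*)"] prod.cong) (metis UN_I)

lemma lookup_msubst_restrict:
  fixes p :: "('v, 'a::comm_ring_1) mpoly"
  shows "Poly_Mapping.lookup (msubst (\<lambda>v. if v \<in> T then mvar v else 0) p) m
   = (if Poly_Mapping.keys m \<subseteq> T then Poly_Mapping.lookup p m else 0)"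
proof -
  let ?\<tau> = "\<lambda>v. if v \<in> T then mvar v else 0 :: ('v, 'a) mpoly"
  have monom_term: "mconst (Poly_Mapping.lookup p m') * msubst_monom ?\<tau> m' =
     (if Poly_Mapping.keys m' \<subseteq> T then Poly_Mapping.single m' (Poly_Mapping.lookup p m') else 0)" for m'
  proof (cases "Poly_Mapping.keys m' \<subseteq> T")
    case True
    then have "msubst_monom ?\<tau> m' = msubst_monom mvar m'"
      unfolding msubst_monom_def by (intro prod.cong) auto
    with True show ?thesis by (simp add: msubst_monom_mvar mconst_mult_single_one)
  next
    case False
    then obtain v where "v \<in> Poly_Mapping.keys m'" "v \<notin> T" by blast
    then have "msubst_monom ?\<tau> m' = 0"
      unfolding msubst_monom_def by (intro prod_zero) (auto simp: in_keys_iff zero_power)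
    with False show ?thesis by simp
  qed
  have "Poly_Mapping.lookup (msubst ?\<tau> p) m = (\<Sum>m'\<in>Poly_Mapping.keys p.
     Poly_Mapping.lookup (if Poly_Mapping.keys m' \<subseteq> T
                          then Poly_Mapping.single m' (Poly_Mapping.lookup p m') else 0) m)"
    unfolding msubst_def msubst_monom_def[symmetric] monom_term lookup_sum ..
  also have "\<dots> = (\<Sum>m'\<in>Poly_Mapping.keys p.
     if m' = m \<and> Poly_Mapping.keys m \<subseteq> T then Poly_Mapping.lookup p m else 0)"
    by (intro sum.cong refl) (auto simp: lookup_single when_def)
  also have "\<dots> = (if Poly_Mapping.keys m \<subseteq> T then Poly_Mapping.lookup p m else 0)"
    by (auto simp: in_keys_iff)
  finally show ?thesis .
qed

section \<open>The coefficients of \<open>Q\<^sup>S\<^sup>S\<^sup>S\<^sup>V\<close> as a polynomial in \<open>x\<close>\<close>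

definition xfree :: "(gvar, 'a::comm_ring_1) mpoly \<Rightarrow> bool" where
  "xfree p \<longleftrightarrow> (\<forall>m\<in>Poly_Mapping.keys p. \<forall>i. Poly_Mapping.lookup m (XV i) = 0)"

lemma xfree_0: "xfree 0"
  by (simp add: xfree_def)

lemma xfree_1: "xfree 1"
  by (simp add: xfree_def)

lemma xfree_mvar: "\<not> is_xvar v \<Longrightarrow> xfree (mvar v)"
  by (auto simp: xfree_def mvar_def lookup_single is_xvar_def)

lemma xfree_add: "xfree p \<Longrightarrow> xfree q \<Longrightarrow> xfree (p + q)"
  unfolding xfree_def using keys_add[of p q] by blast

lemma xfree_diff: "xfree p \<Longrightarrow> xfree q \<Longrightarrow> xfree (p - q)"
  unfolding xfree_def using keys_diff[of p q] by blast

lemma xfree_mult: "xfree p \<Longrightarrow> xfree q \<Longrightarrow> xfree (p * q)"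
  unfolding xfree_def using keys_mult[of p q] by (fastforce simp: lookup_add)

lemma xfree_sum: "(\<And>i. i \<in> I \<Longrightarrow> xfree (f i)) \<Longrightarrow> xfree (\<Sum>i\<in>I. f i)"
  by (induction I rule: infinite_finite_induct) (auto intro: xfree_add simp: xfree_0)

lemma xfree_prod: "(\<And>i. i \<in> I \<Longrightarrow> xfree (f i)) \<Longrightarrow> xfree (\<Prod>i\<in>I. f i)"
  by (induction I rule: infinite_finite_induct) (auto intro: xfree_mult simp: xfree_1)

definition xmonom :: "nat set \<Rightarrow> gvar \<Rightarrow>\<^sub>0 nat" where
  "xmonom S = (\<Sum>i\<in>S. Poly_Mapping.single (XV i) 1)"

lemma prod_mvar_XV: "(\<Prod>i\<in>S. mvar (XV i)) = (Poly_Mapping.single (xmonom S) 1 :: (gvar, 'a::comm_ring_1) mpoly)"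
  unfolding mvar_def xmonom_def prod_single_one ..

lemma lookup_xmonom:
  "finite S \<Longrightarrow> Poly_Mapping.lookup (xmonom S) v = (if \<exists>i\<in>S. v = XV i then 1 else 0)"
  unfolding xmonom_def lookup_sum lookup_single
  by (induction S rule: finite_induct) (auto simp: when_def)

definition xcoeff_term :: "nat set \<Rightarrow> (gvar \<Rightarrow>\<^sub>0 nat) \<Rightarrow> 'a::comm_ring_1 \<Rightarrow> (gvar, 'a) mpoly" where
  "xcoeff_term S m a =
     (if \<forall>i. Poly_Mapping.lookup m (XV i) = (if i \<in> S then 1 else 0)
      then mconst a * (\<Prod>v\<in>{v\<in>Poly_Mapping.keys m. \<not> is_xvar v}. mvar v ^ Poly_Mapping.lookup m v)
      else 0)"

lemma xcoeff_eq_sum_over_superset: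
  assumes "finite A" "Poly_Mapping.keys p \<subseteq> A"
  shows "xcoeff S p = (\<Sum>m\<in>A. xcoeff_term S m (Poly_Mapping.lookup p m))"
proof -
  have "xcoeff S p = (\<Sum>m\<in>Poly_Mapping.keys p. xcoeff_term S m (Poly_Mapping.lookup p m))"
    unfolding xcoeff_def xcoeff_term_def by (simp add: sum.inter_filter)
  also have "\<dots> = (\<Sum>m\<in>A. xcoeff_term S m (Poly_Mapping.lookup p m))"
    using assms by (intro sum.mono_neutral_left) (auto simp: xcoeff_term_def in_keys_iff)
  finally show ?thesis .
qed

lemma xcoeff_term_add: "xcoeff_term S m (a + b) = xcoeff_term S m a + xcoeff_term S m b"
  by (simp add: xcoeff_term_def mconst_add distrib_right)

lemma xcoeff_add: "xcoeff S (p + q) = xcoeff S p + xcoeff S q"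
proof -
  let ?A = "Poly_Mapping.keys p \<union> Poly_Mapping.keys q"
  have "xcoeff S (p + q) = (\<Sum>m\<in>?A. xcoeff_term S m (Poly_Mapping.lookup (p + q) m))"
    by (rule xcoeff_eq_sum_over_superset) (auto simp: keys_add)
  also have "\<dots> = (\<Sum>m\<in>?A. xcoeff_term S m (Poly_Mapping.lookup p m))
                 + (\<Sum>m\<in>?A. xcoeff_term S m (Poly_Mapping.lookup q m))"
    by (simp add: lookup_add xcoeff_term_add sum.distrib)
  also have "\<dots> = xcoeff S p + xcoeff S q"
    by (simp add: xcoeff_eq_sum_over_superset[of ?A p] xcoeff_eq_sum_over_superset[of ?A q])
  finally show ?thesis .
qed

lemma xcoeff_0 [simp]: "xcoeff S 0 = 0"
  by (simp add: xcoeff_def)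

lemma xcoeff_sum: "xcoeff S (\<Sum>i\<in>I. f i) = (\<Sum>i\<in>I. xcoeff S (f i))"
  by (induction I rule: infinite_finite_induct) (auto simp: xcoeff_add)

lemma xcoeff_single: "xcoeff S (Poly_Mapping.single m c) = xcoeff_term S m c"
  using xcoeff_eq_sum_over_superset[of "{m}" "Poly_Mapping.single m c" S] by simp

lemma xcoeff_term_xfree_times_xmonom:
  assumes "finite T" "\<forall>i. Poly_Mapping.lookup m (XV i) = 0"
  shows "xcoeff_term S (m + xmonom T) c = (if T = S then Poly_Mapping.single m c else 0)"
proof -
  have x_exps: "Poly_Mapping.lookup (m + xmonom T) (XV i) = (if i \<in> T then 1 else 0)" for i
    using assms by (auto simp: lookup_add lookup_xmonom)
  show ?thesis
  proof (cases "T = S")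
    case False
    then obtain i where "(i \<in> T) \<noteq> (i \<in> S)" by blast
    with x_exps have "Poly_Mapping.lookup (m + xmonom T) (XV i) \<noteq> (if i \<in> S then 1 else 0)"
      by simp
    then have "xcoeff_term S (m + xmonom T) c = 0"
      unfolding xcoeff_term_def by meson
    with False show ?thesis by simp
  next
    case True
    have "{v\<in>Poly_Mapping.keys (m + xmonom T). \<not> is_xvar v} = Poly_Mapping.keys m"
      using assms by (auto simp: in_keys_iff lookup_add lookup_xmonom is_xvar_def)
    moreover have "Poly_Mapping.lookup (m + xmonom T) v = Poly_Mapping.lookup m v"
      if "v \<in> Poly_Mapping.keys m" for v
      using assms that by (auto simp: in_keys_iff lookup_add lookup_xmonom)
    ultimately have "xcoeff_term S (m + xmonom T) c = mconst c * msubst_monom mvar m"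
      unfolding xcoeff_term_def msubst_monom_def using True x_exps by simp
    with True show ?thesis
      by (simp add: msubst_monom_mvar mconst_mult_single_one)
  qed
qed

lemma xcoeff_xfree_times_xmonom:
  assumes "finite T" "xfree c"
  shows "xcoeff S (c * Poly_Mapping.single (xmonom T) 1) = (if T = S then c else 0)"
proof -
  have "c * Poly_Mapping.single (xmonom T) 1 = (\<Sum>m\<in>Poly_Mapping.keys c.
      Poly_Mapping.single (m + xmonom T) (Poly_Mapping.lookup c m))"
    by (subst poly_mapping_sum_single[of c]) (simp add: sum_distrib_right mult_single)
  then have "xcoeff S (c * Poly_Mapping.single (xmonom T) 1) = (\<Sum>m\<in>Poly_Mapping.keys c.
      if T = S then Poly_Mapping.single m (Poly_Mapping.lookup c m) else 0)"
    using assms unfolding xfree_def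
    by (simp add: xcoeff_sum xcoeff_single xcoeff_term_xfree_times_xmonom)
  also have "\<dots> = (if T = S then c else 0)"
    using poly_mapping_sum_single[of c] by auto
  finally show ?thesis .
qed

definition Q_SSSV_coeff :: "nat \<Rightarrow> nat \<Rightarrow> nat set \<Rightarrow> (gvar, 'a::comm_ring_1) mpoly" where
  "Q_SSSV_coeff n k S =
     (\<Sum>j\<in>{1..k}. mvar (YV j) * ((\<Prod>i\<in>S. mvar (ZV j i)) * (\<Prod>i\<in>{1..n}-S. 1 - mvar (ZV j i)))) + 1"

lemma xfree_Q_SSSV_coeff: "xfree (Q_SSSV_coeff n k S)"
  unfolding Q_SSSV_coeff_def
  by (intro xfree_add xfree_sum xfree_mult xfree_prod xfree_diff xfree_1 xfree_mvar)
     (simp_all add: is_xvar_def)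

lemma P_poly_expand:
  "(P_poly n j :: (gvar, 'a::comm_ring_1) mpoly) = (\<Sum>S\<in>Pow {1..n}.
     ((\<Prod>i\<in>S. mvar (ZV j i)) * (\<Prod>i\<in>{1..n}-S. 1 - mvar (ZV j i))) * Poly_Mapping.single (xmonom S) 1)"
  unfolding P_poly_def prod_add[OF finite_atLeastAtMost]
  by (intro sum.cong refl) (simp add: prod.distrib prod_mvar_XV ac_simps)

lemma prod_XV_plus_one_expand:
  "(\<Prod>i\<in>{1..n}. mvar (XV i) + 1 :: (gvar, 'a::comm_ring_1) mpoly)
   = (\<Sum>S\<in>Pow {1..n}. Poly_Mapping.single (xmonom S) 1)"
  unfolding prod_add[OF finite_atLeastAtMost] by (simp add: prod_mvar_XV)

lemma Q_SSSV_expand: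
  "(Q_SSSV n k :: (gvar, 'a::comm_ring_1) mpoly)
   = (\<Sum>S\<in>Pow {1..n}. Q_SSSV_coeff n k S * Poly_Mapping.single (xmonom S) 1)"
proof -
  define B :: "nat \<Rightarrow> nat set \<Rightarrow> (gvar, 'a) mpoly" where
    "B j S = (\<Prod>i\<in>S. mvar (ZV j i)) * (\<Prod>i\<in>{1..n}-S. 1 - mvar (ZV j i))" for j S
  define M :: "nat set \<Rightarrow> (gvar, 'a) mpoly" where
    "M S = Poly_Mapping.single (xmonom S) 1" for S
  have "(\<Sum>j\<in>{1..k}. mvar (YV j) * (\<Sum>S\<in>Pow {1..n}. B j S * M S))
      = (\<Sum>S\<in>Pow {1..n}. \<Sum>j\<in>{1..k}. mvar (YV j) * (B j S * M S))"
    unfolding sum_distrib_left by (rule sum.swap)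
  also have "\<dots> = (\<Sum>S\<in>Pow {1..n}. (\<Sum>j\<in>{1..k}. mvar (YV j) * B j S) * M S)"
    by (simp add: sum_distrib_right mult.assoc)
  finally have "(Q_SSSV n k :: (gvar, 'a) mpoly)
      = (\<Sum>S\<in>Pow {1..n}. (\<Sum>j\<in>{1..k}. mvar (YV j) * B j S) * M S) + (\<Sum>S\<in>Pow {1..n}. M S)"
    unfolding Q_SSSV_def Q_SSV_def P_poly_expand prod_XV_plus_one_expand B_def M_def by simp
  then show ?thesis
    by (simp add: Q_SSSV_coeff_def B_def M_def distrib_right sum.distrib)
qed

lemma xcoeff_Q_SSSV:
  assumes "S \<subseteq> {1..n}"
  shows "xcoeff S (Q_SSSV n k :: (gvar, 'a::comm_ring_1) mpoly) = Q_SSSV_coeff n k S"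
proof -
  have "xcoeff S (Q_SSSV n k :: (gvar, 'a) mpoly) = (\<Sum>T\<in>Pow {1..n}. if T = S then Q_SSSV_coeff n k T else 0)"
    unfolding Q_SSSV_expand xcoeff_sum
    by (intro sum.cong refl xcoeff_xfree_times_xmonom xfree_Q_SSSV_coeff) (auto intro: finite_subset)
  also have "\<dots> = Q_SSSV_coeff n k S"
    using assms by simp
  finally show ?thesis .
qed

section \<open>Specialising \<open>\<G>\<^sup>S\<^sup>S\<^sup>S\<^sup>V\<close> to a shift\<close>

lemma index_set_subset: "index_set n i \<subseteq> {1..n}"
  by (auto simp: index_set_def)

lemma index_set_inj_on: "inj_on (index_set n) {1..2^n}"
proof (rule inj_onI)
  fix i t assume i: "i \<in> {1..2^n}" and t: "t \<in> {1..2^n}" and eq: "index_set n i = index_set n t"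
  have "bit (i - 1) m = bit (t - 1) m" for m
  proof (cases "m < n")
    case True
    with eq have "(Suc m \<in> index_set n i) = (Suc m \<in> index_set n t)" by simp
    with True show ?thesis by (simp add: index_set_def bit_iff_odd)
  next
    case False
    then have "(2::nat) ^ n \<le> 2 ^ m" by simp
    moreover have "i - 1 < 2 ^ n" "t - 1 < 2 ^ n"
      using i t by auto
    ultimately have "i - 1 < 2 ^ m" "t - 1 < 2 ^ m"
      by linarith+
    then show ?thesis by (simp add: bit_iff_odd)
  qed
  then have "i - 1 = t - 1" by (simp add: bit_eq_iff)
  with i t show "i = t" by auto
qed

lemma prod_indicator_times_prod_complement:
  fixes S U A :: "'b set"
  assumes "finite A" "S \<subseteq> A" "U \<subseteq> A"
  shows "(\<Prod>i\<in>S. if i \<in> U then 1 else 0) * (\<Prod>i\<in>A-S. 1 - (if i \<in> U then 1 else 0))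
         = (if S = U then 1 else (0::'a::comm_ring_1))"
proof (cases "S = U")
  case False
  then consider i where "i \<in> S - U" | i where "i \<in> U - S" by blast
  then show ?thesis
  proof cases
    case 1
    with assms have "(\<Prod>i\<in>S. if i \<in> U then 1 else 0 :: 'a) = 0"
      by (intro prod_zero) (auto intro: finite_subset)
    with False show ?thesis by simp
  next
    case 2
    with assms have "(\<Prod>i\<in>A-S. 1 - (if i \<in> U then 1 else 0 :: 'a)) = 0"
      by (intro prod_zero) auto
    with False show ?thesis by simp
  qed
qed simp

lemma msubst_G_SSSV:
  "msubst \<rho> (G_SSSV n k i) = (\<Sum>j\<in>{1..k}. \<rho> (YV j) *
     ((\<Prod>l\<in>index_set n i. \<rho> (ZV j l)) * (\<Prod>l\<in>{1..n} - index_set n i. 1 - \<rho> (ZV j l)))) + 1"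
  unfolding G_SSSV_def xcoeff_Q_SSSV[OF index_set_subset] Q_SSSV_coeff_def
  by (simp add: msubst_add msubst_sum msubst_mult msubst_prod msubst_diff)

lemma G_SSSV_specialises_to_shift:
  assumes T: "T \<subseteq> {1..2^n}" and card_T: "card T \<le> k"
  obtains \<rho> :: "gvar \<Rightarrow> (nat, 'a::comm_ring_1) mpoly"
  where "\<And>i. i \<in> {1..2^n} \<Longrightarrow> msubst \<rho> (G_SSSV n k i) = (if i \<in> T then mvar i else 0) + 1"
proof -
  have finite_T: "finite T"
    using T finite_subset by blast
  obtain f where f_into: "f ` T \<subseteq> {1..k}" and inj_f: "inj_on f T"
    using card_le_inj[of T "{1..k}"] finite_T card_T by auto
  define g where "g = the_inv_into T f"
  have g_f: "t \<in> T \<Longrightarrow> g (f t) = t" for t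
    unfolding g_def using inj_f by (simp add: the_inv_into_f_f)
  define \<rho> :: "gvar \<Rightarrow> (nat, 'a) mpoly" where
    "\<rho> v = (case v of
        XV i \<Rightarrow> 0
      | YV j \<Rightarrow> if j \<in> f ` T then mvar (g j) else 0
      | ZV j l \<Rightarrow> if j \<in> f ` T \<and> l \<in> index_set n (g j) then 1 else 0)" for v
  have summand: "\<rho> (YV j) * ((\<Prod>l\<in>index_set n i. \<rho> (ZV j l)) * (\<Prod>l\<in>{1..n} - index_set n i. 1 - \<rho> (ZV j l)))
      = (if j \<in> f ` T \<and> g j = i then mvar i else 0)"
    if i: "i \<in> {1..2^n}" for i j
  proof (cases "j \<in> f ` T")
    case True
    then have "g j \<in> T" using g_f by auto
    have "(\<Prod>l\<in>index_set n i. \<rho> (ZV j l)) * (\<Prod>l\<in>{1..n} - index_set n i. 1 - \<rho> (ZV j l))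
        = (\<Prod>l\<in>index_set n i. if l \<in> index_set n (g j) then 1 else 0)
          * (\<Prod>l\<in>{1..n} - index_set n i. 1 - (if l \<in> index_set n (g j) then 1 else 0))"
      using True by (simp add: \<rho>_def)
    also have "\<dots> = (if index_set n i = index_set n (g j) then 1 else 0)"
      by (intro prod_indicator_times_prod_complement index_set_subset) simp
    also have "\<dots> = (if g j = i then 1 else 0)"
      using index_set_inj_on[of n] i \<open>g j \<in> T\<close> T by (auto dest: inj_onD)
    finally show ?thesis
      using True by (auto simp: \<rho>_def)
  qed (simp add: \<rho>_def)
  have "msubst \<rho> (G_SSSV n k i) = (if i \<in> T then mvar i else 0) + 1" if i: "i \<in> {1..2^n}" for i
  proof -
    have "msubst \<rho> (G_SSSV n k i) = (\<Sum>j\<in>{1..k}. if j \<in> f ` T \<and> g j = i then mvar i else 0) + 1"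
      by (simp only: msubst_G_SSSV summand[OF i])
    also have "(\<Sum>j\<in>{1..k}. if j \<in> f ` T \<and> g j = i then mvar i else 0)
        = (\<Sum>j\<in>f ` T. if g j = i then mvar i else 0)"
      using f_into by (intro sum.mono_neutral_cong_right) auto
    also have "\<dots> = (\<Sum>t\<in>T. if t = i then mvar i else 0)"
      using inj_f g_f by (simp add: sum.reindex)
    also have "\<dots> = (if i \<in> T then mvar i else 0)"
      using finite_T by simp
    finally show ?thesis .
  qed
  then show ?thesis by (rule that)
qed

lemma compose_G_nonzero:
  assumes vars_F: "mvars F \<subseteq> {1..2^n}"
    and m: "m \<in> Poly_Mapping.keys (shift_one F)" and card_m: "card (Poly_Mapping.keys m) \<le> k"
  shows "compose_G F n k \<noteq> 0"
proof -
  define T where "T = Poly_Mapping.keys m"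
  have "card (T \<inter> {1..2^n}) \<le> k"
    using card_m card_mono[of T "T \<inter> {1..2^n}"] unfolding T_def by auto
  then obtain \<rho> :: "gvar \<Rightarrow> (nat, 'a) mpoly" where \<rho>:
    "\<And>i. i \<in> {1..2^n} \<Longrightarrow> msubst \<rho> (G_SSSV n k i) = (if i \<in> T \<inter> {1..2^n} then mvar i else 0) + 1"
    using G_SSSV_specialises_to_shift[of "T \<inter> {1..2^n}"] by blast
  have "msubst \<rho> (compose_G F n k) = msubst (\<lambda>i. msubst \<rho> (G_SSSV n k i)) F"
    unfolding compose_G_def by (rule msubst_msubst)
  also have "\<dots> = msubst (\<lambda>i. (if i \<in> T then mvar i else 0) + 1) F"
    using vars_F \<rho> by (intro msubst_cong) auto
  also have "\<dots> = msubst (\<lambda>i. if i \<in> T then mvar i else 0) (shift_one F)"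
    unfolding shift_one_def msubst_msubst by (simp add: msubst_add)
  finally have "Poly_Mapping.lookup (msubst \<rho> (compose_G F n k)) m = Poly_Mapping.lookup (shift_one F) m"
    by (simp add: lookup_msubst_restrict T_def)
  with m show ?thesis
    by (auto simp: in_keys_iff)
qed

theorem lemma5p7:
  fixes n k :: nat and C :: "(nat, 'a::field) mpoly set"
  assumes "n \<ge> 1" and "k \<ge> 1"
    and "\<forall>F\<in>C. mvars F \<subseteq> {1..2 ^ n}"
    and "\<forall>F\<in>C. \<exists>m\<in>Poly_Mapping.keys (shift_one F). card (msupport m) \<le> k"
  shows "\<forall>F\<in>C. F \<noteq> 0 \<longrightarrow> compose_G F n k \<noteq> 0"
  using assms(3,4) compose_G_nonzero unfolding msupport_def by metis

end
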